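(* Let $G$ be a non-empty finite simple graph and $\pi$ a clique vertex-partition of $G$, with $d=\#\pi$. Then for every $0\le i\le d$, $h_i(\mathrm{Ind}(G^\pi))=f_{i-1}(\mathrm{Ind}(G))$, where $f_{i-1}(\mathrm{Ind}(G))$ is the number of independent sets of size $i$ in $G$ (and is $0$ if there are none). That is, the $h$-vector of $\mathrm{Ind}(G^\pi)$ is the face vector of $\mathrm{Ind}(G)$ (padded with zeros).
   Context: $\mathrm{Ind}(G)$ is the simplicial complex whose faces are the independent sets of $G$. A clique vertex-partition of $G=(V,E)$ is a set $\pi=\{W_1,\ldots,W_t\}$ of pairwise disjoint (possibly empty) cliques of $G$ whose union is $V$; $G^\pi$ is the graph with vertex set $V\cup\{w_1,\ldots,w_t\}$ ($w_i$ new) and edge set $E\cup\{vw_i : v\in W_i\}$. For a $(d-1)$-dimensional simplicial complex $\Delta$, the face vector is $(f_{-1},\ldots,f_{d-1})$ with $f_i$ the number of faces of cardinality $i+1$ (so $f_{-1}=1$), and the $h$-vector is $(h_0,\ldots,h_d)$ with $h_j=\sum_{i=0}^{j}(-1)^{j-i}\binom{d-i}{j-i}f_{i-1}$. *)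

theory Defs
  imports Main
begin

text \<open>A finite simple graph: finite vertex set V, symmetric irreflexive edge relation E
  (only its restriction to V matters).\<close>
definition simple_graph :: "'a set \<Rightarrow> ('a \<Rightarrow> 'a \<Rightarrow> bool) \<Rightarrow> bool" where
  "simple_graph V E \<longleftrightarrow> finite V \<and> (\<forall>x\<in>V. \<forall>y\<in>V. E x y \<longleftrightarrow> E y x) \<and> (\<forall>x\<in>V. \<not> E x x)"

definition is_clique :: "'a set \<Rightarrow> ('a \<Rightarrow> 'a \<Rightarrow> bool) \<Rightarrow> 'a set \<Rightarrow> bool" where
  "is_clique V E W \<longleftrightarrow> W \<subseteq> V \<and> (\<forall>x\<in>W. \<forall>y\<in>W. x \<noteq> y \<longrightarrow> E x y)"

definition Ind :: "'a set \<Rightarrow> ('a \<Rightarrow> 'a \<Rightarrow> bool) \<Rightarrow> 'a set set" where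
  "Ind V E = {S. S \<subseteq> V \<and> (\<forall>x\<in>S. \<forall>y\<in>S. \<not> E x y)}"

text \<open>Clique vertex-partition W_0,...,W_{t-1} (possibly empty, pairwise disjoint cliques covering V).\<close>
definition clique_vertex_partition ::
  "'a set \<Rightarrow> ('a \<Rightarrow> 'a \<Rightarrow> bool) \<Rightarrow> nat \<Rightarrow> (nat \<Rightarrow> 'a set) \<Rightarrow> bool" where
  "clique_vertex_partition V E t W \<longleftrightarrow>
     (\<forall>i<t. is_clique V E (W i)) \<and>
     (\<forall>i<t. \<forall>j<t. i \<noteq> j \<longrightarrow> W i \<inter> W j = {}) \<and>
     (\<Union>i<t. W i) = V"

text \<open>The graph G^pi: old vertices Inl v, new vertices Inr i (= w_i).\<close>
definition pi_vertices :: "'a set \<Rightarrow> nat \<Rightarrow> ('a + nat) set" where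
  "pi_vertices V t = Inl ` V \<union> Inr ` {..<t}"

fun pi_edges :: "('a \<Rightarrow> 'a \<Rightarrow> bool) \<Rightarrow> (nat \<Rightarrow> 'a set) \<Rightarrow> ('a + nat) \<Rightarrow> ('a + nat) \<Rightarrow> bool" where
  "pi_edges E W (Inl u) (Inl v) = E u v"
| "pi_edges E W (Inl v) (Inr i) = (v \<in> W i)"
| "pi_edges E W (Inr i) (Inl v) = (v \<in> W i)"
| "pi_edges E W (Inr i) (Inr j) = False"

text \<open>f_{k-1}: number of faces of cardinality k.\<close>
definition face_num :: "'a set set \<Rightarrow> nat \<Rightarrow> nat" where
  "face_num \<Delta> k = card {F \<in> \<Delta>. card F = k}"

text \<open>d with Delta of dimension d-1: the maximal face cardinality.\<close>
definition cx_d :: "'a set set \<Rightarrow> nat" where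
  "cx_d \<Delta> = Max (card ` \<Delta>)"

definition h_vec :: "'a set set \<Rightarrow> nat \<Rightarrow> int" where
  "h_vec \<Delta> j = (\<Sum>i=0..j. (-1) ^ (j - i) * int ((cx_d \<Delta> - i) choose (j - i)) * int (face_num \<Delta> i))"

end

theory Submission
  imports Defs
begin

text \<open>
  Write IG for the independence complex of G and F for that of G^pi,
  where pi = W_0, ..., W_{t-1}.  Every subset of the vertices of G^pi splits uniquely
  as (old vertices S) + (new vertices T), and it is independent exactly when S is
  independent in G and T consists of new vertices w_j whose block W_j misses S.
  Since W_j is a clique, an independent set S meets exactly card S blocks, so S leaves
  t - card S "free" new vertices.  Counting faces by their old part gives
      f_{k-1}(F) = sum over S in IG of binom(t - card S, k - card S),
  and F has dimension t - 1 (the set of all new vertices is a facet of size t).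
  Substituting into the definition of the h-vector and swapping the sums, the inner
  sum is a binomial inversion kernel that equals 1 if card S = i and 0 otherwise,
  whence h_i(F) = f_{i-1}(IG).
\<close>

section \<open>Binomial inversion\<close>

lemma alternating_binomial_sum:
  "(\<Sum>l=0..n. (-1::int) ^ (n - l) * int (n choose l)) = (if n = 0 then 1 else 0)"
proof -
  have "(\<Sum>l\<le>n. of_nat (n choose l) * 1 ^ l * (-1::int) ^ (n - l)) = (1 + (-1)) ^ n"
    by (simp only: binomial_ring)
  then show ?thesis
    by (simp add: atLeast0AtMost mult.commute)
qed

lemma binomial_trinomial_revision:
  fixes i j k t :: nat
  assumes "j \<le> k" "k \<le> i" "i \<le> t"
  shows "((t - k) choose (i - k)) * ((t - j) choose (k - j))
       = ((t - j) choose (i - j)) * ((i - j) choose (k - j))"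
proof -
  have "((t - j) choose (i - j)) * ((i - j) choose (k - j))
      = ((t - j) choose (k - j)) * (((t - j) - (k - j)) choose ((i - j) - (k - j)))"
    by (rule choose_mult) (use assms in auto)
  moreover have "(t - j) - (k - j) = t - k" "(i - j) - (k - j) = i - k"
    using assms by auto
  ultimately show ?thesis by simp
qed

text \<open>Binomial inversion: the matrices (binom(t-j, k-j)) and ((-1)^(i-k) binom(t-k, i-k))
  are mutually inverse.  This is what turns face numbers back into an h-vector.\<close>
lemma binomial_inversion_kernel:
  fixes i j t :: nat
  assumes "i \<le> t"
  shows "(\<Sum>k=0..i. (-1::int) ^ (i - k) * int ((t - k) choose (i - k)) *
           (if j \<le> k then int ((t - j) choose (k - j)) else 0)) = (if j = i then 1 else 0)"
proof (cases "j \<le> i")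
  case False
  then show ?thesis by (auto intro!: sum.neutral)
next
  case True
  let ?f = "\<lambda>k. (-1::int) ^ (i - k) * int ((t - k) choose (i - k)) *
                (if j \<le> k then int ((t - j) choose (k - j)) else 0)"
  have "sum ?f {0..i} = sum ?f {0..<j} + sum ?f {j..i}"
    using True by (subst sum.union_disjoint[symmetric]) (auto intro: sum.cong)
  also have "sum ?f {0..<j} = 0"
    by (rule sum.neutral) auto
  also have "sum ?f {j..i}
      = int ((t - j) choose (i - j)) * (\<Sum>k=j..i. (-1::int) ^ (i - k) * int ((i - j) choose (k - j)))"
    unfolding sum_distrib_left
  proof (rule sum.cong)
    fix k assume k: "k \<in> {j..i}"
    then have "int ((t - k) choose (i - k)) * int ((t - j) choose (k - j))
             = int ((t - j) choose (i - j)) * int ((i - j) choose (k - j))"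
      using binomial_trinomial_revision[of j k i t] assms by (simp flip: of_nat_mult)
    then show "?f k = int ((t - j) choose (i - j)) * ((-1) ^ (i - k) * int ((i - j) choose (k - j)))"
      using k by (simp add: algebra_simps)
  qed simp
  also have "(\<Sum>k=j..i. (-1::int) ^ (i - k) * int ((i - j) choose (k - j)))
           = (\<Sum>l=0..i-j. (-1::int) ^ ((i - j) - l) * int ((i - j) choose l))"
  proof -
    have "(\<Sum>k=0+j..(i-j)+j. (-1::int) ^ (i - k) * int ((i - j) choose (k - j)))
        = (\<Sum>l=0..i-j. (-1::int) ^ (i - (l + j)) * int ((i - j) choose (l + j - j)))"
      by (rule sum.shift_bounds_cl_nat_ivl)
    then show ?thesis using True by (simp add: add.commute)
  qed
  also have "\<dots> = (if i - j = 0 then 1 else 0)"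
    by (rule alternating_binomial_sum)
  finally show ?thesis using True by auto
qed

lemma h_vec_eq_face_num_of_expansion:
  fixes \<Delta> :: "'b set set" and \<Gamma> :: "'a set set"
  assumes "finite \<Gamma>" and "cx_d \<Delta> = t" and "i \<le> t"
    and expansion: "\<And>k. int (face_num \<Delta> k)
          = (\<Sum>S\<in>\<Gamma>. if card S \<le> k then int ((t - card S) choose (k - card S)) else 0)"
  shows "h_vec \<Delta> i = int (face_num \<Gamma> i)"
proof -
  have "h_vec \<Delta> i = (\<Sum>k=0..i. \<Sum>S\<in>\<Gamma>. (-1) ^ (i - k) * int ((t - k) choose (i - k)) *
          (if card S \<le> k then int ((t - card S) choose (k - card S)) else 0))"
    unfolding h_vec_def assms(2) expansion by (simp add: sum_distrib_left)
  also have "\<dots> = (\<Sum>S\<in>\<Gamma>. \<Sum>k=0..i. (-1) ^ (i - k) * int ((t - k) choose (i - k)) *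
          (if card S \<le> k then int ((t - card S) choose (k - card S)) else 0))"
    by (rule sum.swap)
  also have "\<dots> = (\<Sum>S\<in>\<Gamma>. if card S = i then 1 else 0)"
    using binomial_inversion_kernel[OF assms(3)] by simp
  also have "\<dots> = int (face_num \<Gamma> i)"
    unfolding face_num_def using sum.inter_filter[OF assms(1), of "\<lambda>_. 1::int"] by simp
  finally show ?thesis .
qed

section \<open>Subsets of a disjoint sum\<close>

lemma Inl_Inr_decomposition: "X = Inl ` (Inl -` X) \<union> Inr ` (Inr -` X)"
proof
  show "X \<subseteq> Inl ` (Inl -` X) \<union> Inr ` (Inr -` X)"
  proof
    fix x assume "x \<in> X"
    then show "x \<in> Inl ` (Inl -` X) \<union> Inr ` (Inr -` X)"
      by (cases x) auto
  qed
qed auto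

lemma card_Inl_Inr:
  assumes "finite S" "finite T"
  shows "card (Inl ` S \<union> Inr ` T) = card S + card T"
  using assms by (subst card_Un_disjoint) (auto simp: card_image)

lemma card_Inl_Inr_preimages:
  assumes "finite (Inl -` X)" "finite (Inr -` X)"
  shows "card X = card (Inl -` X) + card (Inr -` X)"
proof -
  have "card X = card (Inl ` (Inl -` X) \<union> Inr ` (Inr -` X))"
    using arg_cong[OF Inl_Inr_decomposition[of X], of card] .
  also have "\<dots> = card (Inl -` X) + card (Inr -` X)"
    using assms by (rule card_Inl_Inr)
  finally show ?thesis .
qed

section \<open>The independence complex of G^pi\<close>

text \<open>The new vertices w_j available to an independent set S of G: those whose block misses S.\<close>
definition free_blocks :: "nat \<Rightarrow> (nat \<Rightarrow> 'a set) \<Rightarrow> 'a set \<Rightarrow> nat set" where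
  "free_blocks t W S = {j. j < t \<and> W j \<inter> S = {}}"

lemma finite_free_blocks [simp]: "finite (free_blocks t W S)"
  unfolding free_blocks_def by simp

lemma Ind_pi_iff:
  "Inl ` S \<union> Inr ` T \<in> Ind (pi_vertices V t) (pi_edges E W)
     \<longleftrightarrow> S \<in> Ind V E \<and> T \<subseteq> free_blocks t W S"
proof -
  have "(\<forall>x\<in>Inl ` S \<union> Inr ` T. \<forall>y\<in>Inl ` S \<union> Inr ` T. \<not> pi_edges E W x y)
      \<longleftrightarrow> (\<forall>x\<in>S. \<forall>y\<in>S. \<not> E x y) \<and> (\<forall>j\<in>T. W j \<inter> S = {})"
    by (simp add: ball_Un) blast
  moreover have "Inl ` S \<union> Inr ` T \<subseteq> pi_vertices V t \<longleftrightarrow> S \<subseteq> V \<and> T \<subseteq> {..<t}"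
    unfolding pi_vertices_def by auto
  ultimately show ?thesis
    unfolding Ind_def free_blocks_def by auto
qed

lemma Ind_pi_decompose:
  assumes "X \<in> Ind (pi_vertices V t) (pi_edges E W)"
  shows "Inl -` X \<in> Ind V E" and "Inr -` X \<subseteq> free_blocks t W (Inl -` X)"
  using assms Ind_pi_iff[of "Inl -` X" "Inr -` X" V t E W] Inl_Inr_decomposition[of X] by auto

text \<open>A clique meets an independent set in at most one vertex; hence an independent set
  meets exactly card S blocks of a clique vertex-partition.\<close>
lemma card_blocks_met:
  assumes "finite V" and cvp: "clique_vertex_partition V E t W" and S: "S \<in> Ind V E"
  shows "card {j. j < t \<and> W j \<inter> S \<noteq> {}} = card S"
proof -
  define met where "met = {j. j < t \<and> W j \<inter> S \<noteq> {}}"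
  have "S \<subseteq> V" and indep: "\<And>x y. x \<in> S \<Longrightarrow> y \<in> S \<Longrightarrow> \<not> E x y"
    using S unfolding Ind_def by auto
  have cliques: "\<And>j. j < t \<Longrightarrow> is_clique V E (W j)"
    and disjoint: "\<And>j l. j < t \<Longrightarrow> l < t \<Longrightarrow> j \<noteq> l \<Longrightarrow> W j \<inter> W l = {}"
    and cover: "(\<Union>j<t. W j) = V"
    using cvp unfolding clique_vertex_partition_def by auto
  have singleton: "card (W j \<inter> S) = 1" if "j \<in> met" for j
  proof -
    from that obtain v where v: "v \<in> W j \<inter> S" unfolding met_def by blast
    have "W j \<inter> S = {v}"
      using v indep cliques[of j] that unfolding met_def is_clique_def by blast
    then show ?thesis by simp
  qed
  have "S = (\<Union>j\<in>met. W j \<inter> S)"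
    using cover \<open>S \<subseteq> V\<close> unfolding met_def by blast
  then have "card S = card (\<Union>j\<in>met. W j \<inter> S)"
    by simp
  also have "\<dots> = (\<Sum>j\<in>met. card (W j \<inter> S))"
  proof (rule card_UN_disjoint)
    show "finite met" unfolding met_def by simp
    show "\<forall>j\<in>met. finite (W j \<inter> S)"
      using \<open>finite V\<close> \<open>S \<subseteq> V\<close> finite_subset by blast
    show "\<forall>j\<in>met. \<forall>l\<in>met. j \<noteq> l \<longrightarrow> (W j \<inter> S) \<inter> (W l \<inter> S) = {}"
      using disjoint unfolding met_def by blast
  qed
  also have "\<dots> = card met"
    using singleton by simp
  finally show ?thesis unfolding met_def ..
qed

lemma card_free_blocks:
  assumes "finite V" and "clique_vertex_partition V E t W" and "S \<in> Ind V E"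
  shows "card (free_blocks t W S) = t - card S"
proof -
  have "free_blocks t W S = {..<t} - {j. j < t \<and> W j \<inter> S \<noteq> {}}"
    unfolding free_blocks_def by auto
  moreover have "card ({..<t} - {j. j < t \<and> W j \<inter> S \<noteq> {}})
      = card {..<t} - card {j. j < t \<and> W j \<inter> S \<noteq> {}}"
    by (rule card_Diff_subset) auto
  ultimately show ?thesis
    using card_blocks_met[OF assms] by simp
qed

lemma finite_Ind: "finite V \<Longrightarrow> finite (Ind V E)"
  unfolding Ind_def by (rule finite_subset[of _ "Pow V"]) auto

lemma finite_Ind_member: "finite V \<Longrightarrow> S \<in> Ind V E \<Longrightarrow> finite S"
  unfolding Ind_def using finite_subset by blast

lemma faces_of_card_Ind_pi:
  assumes "finite V"
  shows "{X \<in> Ind (pi_vertices V t) (pi_edges E W). card X = k}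
       = (\<lambda>(S, T). Inl ` S \<union> Inr ` T) `
           (SIGMA S:{S \<in> Ind V E. card S \<le> k}. {T. T \<subseteq> free_blocks t W S \<and> card T = k - card S})"
    (is "?faces = ?join ` ?pairs")
proof (intro equalityI subsetI)
  fix X assume "X \<in> ?join ` ?pairs"
  then obtain S T where X: "X = Inl ` S \<union> Inr ` T" and S: "S \<in> Ind V E"
    and T: "T \<subseteq> free_blocks t W S" and card: "card S + card T = k"
    by auto
  have "card X = card S + card T"
    unfolding X using finite_Ind_member[OF assms S] finite_subset[OF T finite_free_blocks] by (simp add: card_Inl_Inr)
  then show "X \<in> ?faces"
    using X S T card by (simp add: Ind_pi_iff)
next
  fix X assume X: "X \<in> ?faces"
  then have "X \<in> Ind (pi_vertices V t) (pi_edges E W)"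
    by simp
  then have old: "Inl -` X \<in> Ind V E" and new: "Inr -` X \<subseteq> free_blocks t W (Inl -` X)"
    by (rule Ind_pi_decompose)+
  have "card X = card (Inl -` X) + card (Inr -` X)"
    using finite_Ind_member[OF assms old] finite_subset[OF new finite_free_blocks] by (rule card_Inl_Inr_preimages)
  then have "(Inl -` X, Inr -` X) \<in> ?pairs"
    using old new X by auto
  moreover have "X = ?join (Inl -` X, Inr -` X)"
    using Inl_Inr_decomposition by simp
  ultimately show "X \<in> ?join ` ?pairs" by blast
qed

lemma face_num_Ind_pi:
  assumes "finite V" and cvp: "clique_vertex_partition V E t W"
  shows "int (face_num (Ind (pi_vertices V t) (pi_edges E W)) k)
       = (\<Sum>S\<in>Ind V E. if card S \<le> k then int ((t - card S) choose (k - card S)) else 0)"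
proof -
  define A where "A = {S \<in> Ind V E. card S \<le> k}"
  define B where "B S = {T. T \<subseteq> free_blocks t W S \<and> card T = k - card S}" for S
  have "inj_on (\<lambda>(S, T). Inl ` S \<union> Inr ` T) (Sigma A B)"
    by (rule inj_on_inverseI[where g = "\<lambda>X. (Inl -` X, Inr -` X)"]) auto
  then have "face_num (Ind (pi_vertices V t) (pi_edges E W)) k = card (Sigma A B)"
    unfolding face_num_def faces_of_card_Ind_pi[OF assms(1)] A_def B_def by (rule card_image)
  also have "\<dots> = (\<Sum>S\<in>A. card (B S))"
    using finite_Ind[OF \<open>finite V\<close>] by (intro card_SigmaI) (auto simp: A_def B_def)
  also have "\<dots> = (\<Sum>S\<in>A. (t - card S) choose (k - card S))"
    using card_free_blocks[OF \<open>finite V\<close> cvp]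
    by (intro sum.cong) (auto simp: B_def n_subsets A_def)
  finally have "int (face_num (Ind (pi_vertices V t) (pi_edges E W)) k)
      = (\<Sum>S\<in>A. int ((t - card S) choose (k - card S)))"
    by simp
  also have "\<dots> = (\<Sum>S\<in>Ind V E. if card S \<le> k then int ((t - card S) choose (k - card S)) else 0)"
    unfolding A_def using finite_Ind[OF \<open>finite V\<close>] by (simp add: sum.inter_filter)
  finally show ?thesis .
qed

text \<open>Ind(G^pi) has dimension t - 1: faces have at most card S + (t - card S) = t vertices,
  and the set of all new vertices is a face of size t.\<close>
lemma cx_d_Ind_pi:
  assumes "finite V" and cvp: "clique_vertex_partition V E t W"
  shows "cx_d (Ind (pi_vertices V t) (pi_edges E W)) = t"
  unfolding cx_d_def
proof (rule Max_eqI)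
  show "finite (card ` Ind (pi_vertices V t) (pi_edges E W))"
    using \<open>finite V\<close> by (simp add: finite_Ind pi_vertices_def)
  have "Inl ` {} \<union> Inr ` {..<t} \<in> Ind (pi_vertices V t) (pi_edges E W)"
    unfolding Ind_pi_iff by (auto simp: Ind_def free_blocks_def)
  moreover have "card (Inl ` {} \<union> Inr ` {..<t}) = t"
    by (simp add: card_image)
  ultimately show "t \<in> card ` Ind (pi_vertices V t) (pi_edges E W)"
    by (metis image_eqI)
next
  fix n assume "n \<in> card ` Ind (pi_vertices V t) (pi_edges E W)"
  then obtain X where X: "X \<in> Ind (pi_vertices V t) (pi_edges E W)" "n = card X" by auto
  have old: "Inl -` X \<in> Ind V E" and new: "Inr -` X \<subseteq> free_blocks t W (Inl -` X)"
    using Ind_pi_decompose[OF X(1)] by auto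
  have "card {j. j < t \<and> W j \<inter> Inl -` X \<noteq> {}} \<le> card {..<t}"
    by (rule card_mono) auto
  then have "card (Inl -` X) \<le> t"
    using card_blocks_met[OF assms old] by simp
  moreover have "card (Inr -` X) \<le> t - card (Inl -` X)"
    using card_mono[OF finite_free_blocks new] card_free_blocks[OF assms old] by simp
  moreover have "n = card (Inl -` X) + card (Inr -` X)"
    unfolding X(2) using finite_Ind_member[OF \<open>finite V\<close> old] finite_subset[OF new finite_free_blocks]
    by (rule card_Inl_Inr_preimages)
  ultimately show "n \<le> t" by simp
qed

theorem proposition3p5:
  fixes V :: "'a set" and E :: "'a \<Rightarrow> 'a \<Rightarrow> bool" and t :: nat and W :: "nat \<Rightarrow> 'a set"
  assumes "simple_graph V E" and "V \<noteq> {}"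
    and "clique_vertex_partition V E t W"
    and "i \<le> t"
  shows "h_vec (Ind (pi_vertices V t) (pi_edges E W)) i = int (face_num (Ind V E) i)"
proof -
  have "finite V" using assms(1) unfolding simple_graph_def by simp
  show ?thesis
  proof (rule h_vec_eq_face_num_of_expansion)
    show "finite (Ind V E)" using \<open>finite V\<close> by (rule finite_Ind)
    show "cx_d (Ind (pi_vertices V t) (pi_edges E W)) = t"
      using \<open>finite V\<close> assms(3) by (rule cx_d_Ind_pi)
    show "i \<le> t" by (fact assms(4))
    show "int (face_num (Ind (pi_vertices V t) (pi_edges E W)) k)
        = (\<Sum>S\<in>Ind V E. if card S \<le> k then int ((t - card S) choose (k - card S)) else 0)" for k
      using \<open>finite V\<close> assms(3) by (rule face_num_Ind_pi)
  qed
qed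

end
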